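(* Let $D=(0,1)$, $\alpha\in(3/2,2)$ and $\mu\ge\alpha$. The operator $S:H^1_0(D)\to L^2(D)$ defined by $$Sw={}_0^RD_x^{2-\alpha}w-({}_0^RD_x^{2-\alpha}w)(1)\,x^\mu$$ is compact.
   Context: For $w\in H^1_0(D)$, ${}_0^RD_x^{2-\alpha}w(x)=\frac{1}{\Gamma(\alpha-1)}\int_0^x(x-t)^{\alpha-2}w'(t)dt$ (the Riemann–Liouville derivative $\frac{d}{dx}\,{}_0I_x^{\alpha-1}w$, where $({}_0I_x^\gamma g)(x)=\frac{1}{\Gamma(\gamma)}\int_0^x(x-t)^{\gamma-1}g(t)dt$), and $({}_0^RD_x^{2-\alpha}w)(1)=\frac{1}{\Gamma(\alpha-1)}\int_0^1(1-t)^{\alpha-2}w'(t)dt$. *)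

theory Defs
  imports "HOL-Analysis.Analysis"
begin

abbreviation D :: "real set" where "D \<equiv> {0<..<1}"

definition L2D :: "(real \<Rightarrow> real) \<Rightarrow> bool" where
  "L2D f \<longleftrightarrow> set_borel_measurable lborel D f \<and> set_integrable lborel D (\<lambda>x. (f x)\<^sup>2)"

definition L2norm :: "(real \<Rightarrow> real) \<Rightarrow> real" where
  "L2norm f = sqrt (LINT x:D|lborel. (f x)\<^sup>2)"

text \<open>g is the (weak) derivative of w in L^2(D), with w(0) = 0 and w(1) = 0,
  i.e. w(x) = int_0^x g on [0,1] (absolutely continuous representative).\<close>
definition H10_deriv :: "(real \<Rightarrow> real) \<Rightarrow> (real \<Rightarrow> real) \<Rightarrow> bool" where
  "H10_deriv w g \<longleftrightarrow> L2D g \<and> (\<forall>x\<in>{0..1}. w x = (LINT t:{0<..<x}|lborel. g t)) \<and> w 1 = 0"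

definition H10 :: "(real \<Rightarrow> real) set" where
  "H10 = {w. \<exists>g. H10_deriv w g}"

definition wderiv :: "(real \<Rightarrow> real) \<Rightarrow> (real \<Rightarrow> real)" where
  "wderiv w = (SOME g. H10_deriv w g)"

definition H1norm :: "(real \<Rightarrow> real) \<Rightarrow> real" where
  "H1norm w = sqrt ((L2norm w)\<^sup>2 + (L2norm (wderiv w))\<^sup>2)"

text \<open>Riemann--Liouville derivative of order 2 - alpha of w in H^1_0:
  1/Gamma(alpha-1) * int_0^x (x-t)^(alpha-2) w'(t) dt.\<close>
definition RL :: "real \<Rightarrow> (real \<Rightarrow> real) \<Rightarrow> real \<Rightarrow> real" where
  "RL \<alpha> w x = (LINT t:{0<..<x}|lborel. (x - t) powr (\<alpha> - 2) * wderiv w t) / Gamma (\<alpha> - 1)"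

definition Sop :: "real \<Rightarrow> real \<Rightarrow> (real \<Rightarrow> real) \<Rightarrow> real \<Rightarrow> real" where
  "Sop \<alpha> \<mu> w x = RL \<alpha> w x - RL \<alpha> w 1 * x powr \<mu>"

definition compact_H10_L2 :: "((real \<Rightarrow> real) \<Rightarrow> (real \<Rightarrow> real)) \<Rightarrow> bool" where
  "compact_H10_L2 S \<longleftrightarrow> (\<forall>w\<in>H10. L2D (S w)) \<and>
     (\<forall>ws :: nat \<Rightarrow> real \<Rightarrow> real. (\<forall>n. ws n \<in> H10) \<and> (\<exists>C::real. \<forall>n. H1norm (ws n) \<le> C) \<longrightarrow>
        (\<exists>r f. strict_mono r \<and> L2D f \<and> (\<lambda>k. L2norm (\<lambda>x. S (ws (r k)) x - f x)) \<longlonglongrightarrow> 0))"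

end

theory Submission
  imports Defs "HOL-Complex_Analysis.Great_Picard"
begin

text \<open>
  For w in H^1_0(D), RL \<alpha> w x is the integral of w' against the kernel (x - t) powr (\<alpha> - 2)
  on (0, x), which is square integrable because \<alpha> > 3/2. Cauchy--Schwarz therefore bounds
  RL \<alpha> w uniformly on [0,1] and makes it Hoelder continuous of exponent \<alpha> - 3/2, with
  constants proportional to the L^2 norm of w'. By Arzela--Ascoli an H^1-bounded sequence has a
  subsequence along which RL \<alpha> w converges uniformly on [0,1]; the rank-one correction
  (RL \<alpha> w)(1) x powr \<mu> converges with it, and uniform convergence implies convergence in L^2(D).
\<close>

lemma has_integral_powr_to_endpoint:
  fixes a b p :: real
  assumes p: "p > -1" and ab: "a \<le> b"
  shows "((\<lambda>t. (b - t) powr p) has_integral ((b - a) powr (p+1) / (p+1))) {a<..<b}"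
proof -
  have "((\<lambda>x. x powr p) has_integral ((b - a) powr (p+1) / (p+1))) (cbox 0 (b-a))"
    using has_integral_powr_from_0[OF p, of "b-a"] ab by simp
  from has_integral_affinity[OF this, of "-1" b]
  have "((\<lambda>x. (-1 *\<^sub>R x + b) powr p) has_integral ((b - a) powr (p+1) / (p+1)))
          ((\<lambda>x. (1 / -1) *\<^sub>R x + - ((1 / -1) *\<^sub>R b)) ` cbox 0 (b-a))" by simp
  moreover have "((\<lambda>x. (1 / -1) *\<^sub>R x + - ((1 / -1) *\<^sub>R b)) ` cbox 0 (b-a)) = {a..b}"
    using image_affinity_atLeastAtMost[of "-1" b 0 "b-a"] ab by simp
  ultimately have "((\<lambda>t. (b - t) powr p) has_integral ((b - a) powr (p+1) / (p+1))) {a..b}"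
    by simp
  then show ?thesis
    by (metis box_real(1) cbox_interval has_integral_open_interval)
qed

lemma set_integral_powr_to_endpoint:
  fixes a b p :: real
  assumes p: "p > -1" and ab: "a \<le> b"
  shows "set_integrable lborel {a<..<b} (\<lambda>t. (b - t) powr p)"
    and "(LINT t:{a<..<b}|lborel. (b - t) powr p) = (b - a) powr (p+1) / (p+1)"
proof -
  note has = has_integral_powr_to_endpoint[OF p ab]
  then have "(\<lambda>t. (b - t) powr p) absolutely_integrable_on {a<..<b}"
    by (intro nonnegative_absolutely_integrable_1) (auto simp: integrable_on_def)
  then have "integrable lebesgue (\<lambda>t. indicator {a<..<b} t *\<^sub>R (b - t) powr p)"
    by (simp add: set_integrable_def)
  then show int: "set_integrable lborel {a<..<b} (\<lambda>t. (b - t) powr p)"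
    unfolding set_integrable_def
    by (subst (asm) integrable_completion) (auto simp: greaterThanLessThan_def[symmetric])
  show "(LINT t:{a<..<b}|lborel. (b - t) powr p) = (b - a) powr (p+1) / (p+1)"
    using set_borel_integral_eq_integral(2)[OF int] has integral_unique by metis
qed

lemma quadratic_nonneg_imp_discriminant_le:
  fixes A B C :: real
  assumes "\<And>t. 0 \<le> A + 2*t*C + t^2*B" "0 \<le> B"
  shows "C^2 \<le> A * B"
proof (cases "B = 0")
  case True
  show ?thesis
  proof (rule ccontr)
    assume "\<not> ?thesis"
    then have "C \<noteq> 0" using True by simp
    have "0 \<le> A + 2*(-(A+1)/(2*C))*C + (-(A+1)/(2*C))^2*B" by (rule assms(1))
    then show False using True \<open>C \<noteq> 0\<close> by (simp add: field_simps)
  qed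
next
  case False
  then have B: "B > 0" using assms(2) by simp
  have "0 \<le> A + 2*(-C/B)*C + (-C/B)^2*B" by (rule assms(1))
  also have "\<dots> = (A*B - C^2)/B" using B by (simp add: field_simps power2_eq_square)
  finally show ?thesis using B by (simp add: zero_le_divide_iff)
qed

lemma Cauchy_Schwarz_integral:
  fixes f g :: "'a \<Rightarrow> real"
  assumes f: "f \<in> borel_measurable M" "integrable M (\<lambda>x. (f x)^2)"
    and g: "g \<in> borel_measurable M" "integrable M (\<lambda>x. (g x)^2)"
  shows "integrable M (\<lambda>x. f x * g x)"
    and "\<bar>\<integral>x. f x * g x \<partial>M\<bar> \<le> sqrt (\<integral>x. (f x)^2 \<partial>M) * sqrt (\<integral>x. (g x)^2 \<partial>M)"
proof -
  have AM_GM: "\<bar>u * v\<bar> \<le> (u^2 + v^2)/2" for u v :: real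
    using sum_squares_bound[of "\<bar>u\<bar>" "\<bar>v\<bar>"] by (simp add: abs_mult)
  show fg: "integrable M (\<lambda>x. f x * g x)"
  proof (rule Bochner_Integration.integrable_bound[where f="\<lambda>x. ((f x)^2 + (g x)^2)/2"])
    show "integrable M (\<lambda>x. ((f x)^2 + (g x)^2)/2)" using f g by auto
    show "(\<lambda>x. f x * g x) \<in> borel_measurable M" using f g by measurable
    show "AE x in M. norm (f x * g x) \<le> norm (((f x)^2 + (g x)^2)/2)"
      using AM_GM by (auto intro!: AE_I2)
  qed
  define A where "A = (\<integral>x. (f x)^2 \<partial>M)"
  define B where "B = (\<integral>x. (g x)^2 \<partial>M)"
  define C where "C = (\<integral>x. f x * g x \<partial>M)"
  have "0 \<le> A + 2*t*C + t^2*B" for t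
  proof -
    have "0 \<le> (\<integral>x. (f x + t * g x)^2 \<partial>M)" by simp
    also have "\<dots> = (\<integral>x. (f x)^2 + (2*t) * (f x * g x) + t^2 * (g x)^2 \<partial>M)"
      by (intro Bochner_Integration.integral_cong) (auto simp: power2_eq_square algebra_simps)
    also have "\<dots> = A + 2*t*C + t^2*B"
      unfolding A_def B_def C_def using f g fg by simp
    finally show ?thesis .
  qed
  then have "C^2 \<le> A * B"
    by (rule quadratic_nonneg_imp_discriminant_le) (simp add: B_def)
  then show "\<bar>\<integral>x. f x * g x \<partial>M\<bar> \<le> sqrt (\<integral>x. (f x)^2 \<partial>M) * sqrt (\<integral>x. (g x)^2 \<partial>M)"
    unfolding A_def B_def C_def by (metis real_sqrt_abs real_sqrt_le_mono real_sqrt_mult)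
qed

definition RL_kernel :: "real \<Rightarrow> real \<Rightarrow> real \<Rightarrow> real" where
  "RL_kernel b x t = indicator {0<..<x} t * (x - t) powr b"

lemma RL_kernel_measurable [measurable]: "RL_kernel b x \<in> borel_measurable lborel"
  unfolding RL_kernel_def by measurable

lemma RL_kernel_square: "(RL_kernel b x t)^2 = indicator {0<..<x} t * (x - t) powr (2*b)"
  by (simp add: RL_kernel_def indicator_def power2_eq_square powr_add[symmetric])

lemma integral_RL_kernel_square:
  assumes "b > -1/2" "0 \<le> x"
  shows "integrable lborel (\<lambda>t. (RL_kernel b x t)^2)"
    and "(\<integral>t. (RL_kernel b x t)^2 \<partial>lborel) = x powr (2*b+1) / (2*b+1)"
  using set_integral_powr_to_endpoint[of "2*b" 0 x] assms
  by (simp_all add: RL_kernel_square set_integrable_def set_lebesgue_integral_def)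

text \<open>Since \<open>b \<le> 0\<close> the kernel decreases in \<open>x\<close>, so on \<open>(0, y)\<close> the estimate is
  \<open>(u - v)\<^sup>2 \<le> v\<^sup>2 - u\<^sup>2\<close> for \<open>0 \<le> u \<le> v\<close>; the right-hand side has an explicit integral.\<close>
lemma RL_kernel_diff_square_le:
  assumes b: "b \<le> 0" and yx: "0 \<le> y" "y \<le> x" and t: "t \<noteq> y"
  shows "(RL_kernel b x t - RL_kernel b y t)^2
    \<le> (RL_kernel b y t)^2 - (RL_kernel b x t)^2 + 2 * (indicator {y<..<x} t * (x - t) powr (2*b))"
proof -
  consider "t \<le> 0" | "0 < t" "t < y" | "y < t" "t < x" | "x \<le> t" using t by linarith
  then show ?thesis
  proof cases
    case 2
    define u where "u = (x - t) powr b"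
    define v where "v = (y - t) powr b"
    have "0 \<le> u" "u \<le> v"
      using 2 yx b by (auto simp: u_def v_def intro: powr_mono2')
    then have "(v - u) * (v - u) \<le> (v - u) * (v + u)" by (intro mult_left_mono) auto
    then have "(u - v)^2 \<le> v^2 - u^2" by (simp add: power2_eq_square algebra_simps)
    then show ?thesis using 2 yx by (simp add: RL_kernel_def u_def v_def)
  next
    case 3
    have "((x - t) powr b)^2 = (x - t) powr (2*b)"
      by (simp add: power2_eq_square powr_add[symmetric])
    then show ?thesis using 3 yx by (simp add: RL_kernel_def)
  qed (use yx in \<open>simp_all add: RL_kernel_def\<close>)
qed

lemma integral_RL_kernel_diff_square:
  assumes b: "b > -1/2" "b \<le> 0" and yx: "0 \<le> y" "y \<le> x"
  shows "integrable lborel (\<lambda>t. (RL_kernel b x t - RL_kernel b y t)^2)"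
    and "(\<integral>t. (RL_kernel b x t - RL_kernel b y t)^2 \<partial>lborel) \<le> 2 * (x - y) powr (2*b+1) / (2*b+1)"
proof -
  have p: "2*b > -1" using b by simp
  note Kx = integral_RL_kernel_square[OF b(1), of x] and Ky = integral_RL_kernel_square[OF b(1) yx(1)]
  note mid = set_integral_powr_to_endpoint[OF p yx(2)]
  define h where
    "h t = (RL_kernel b y t)^2 - (RL_kernel b x t)^2 + 2 * (indicator {y<..<x} t * (x - t) powr (2*b))"
    for t
  have h: "integrable lborel h"
    unfolding h_def using Kx Ky mid(1) yx by (auto simp: set_integrable_def)
  have square_diff: "(u - v)^2 \<le> 2 * u^2 + 2 * v^2" for u v :: real
    using zero_le_power2[of "u + v"] by (simp add: power2_eq_square algebra_simps)
  show int: "integrable lborel (\<lambda>t. (RL_kernel b x t - RL_kernel b y t)^2)"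
    by (rule Bochner_Integration.integrable_bound[where f="\<lambda>t. 2 * (RL_kernel b x t)^2 + 2 * (RL_kernel b y t)^2"])
       (use Kx Ky yx in \<open>auto intro!: AE_I2 simp: square_diff\<close>)
  have "(\<integral>t. (RL_kernel b x t - RL_kernel b y t)^2 \<partial>lborel) \<le> (\<integral>t. h t \<partial>lborel)"
    using AE_lborel_singleton[of y] RL_kernel_diff_square_le[OF b(2) yx]
    by (intro integral_mono_AE[OF int h]) (auto simp: h_def elim!: eventually_mono)
  also have "\<dots> = y powr (2*b+1) / (2*b+1) - x powr (2*b+1) / (2*b+1) + 2 * ((x - y) powr (2*b+1) / (2*b+1))"
    unfolding h_def using Kx Ky mid yx by (simp add: set_integrable_def set_lebesgue_integral_def)
  also have "\<dots> \<le> 2 * (x - y) powr (2*b+1) / (2*b+1)"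
    using yx p by (simp add: divide_right_mono powr_mono2)
  finally show "(\<integral>t. (RL_kernel b x t - RL_kernel b y t)^2 \<partial>lborel) \<le> 2 * (x - y) powr (2*b+1) / (2*b+1)" .
qed

lemma continuous_on_imp_L2D:
  assumes "continuous_on {0..1} f"
  shows "L2D f"
proof -
  have "set_integrable lborel {0..1} f" using assms by (rule borel_integrable_atLeastAtMost')
  then have "set_integrable lborel D f" by (rule set_integrable_subset) auto
  then have "set_borel_measurable lborel D f"
    unfolding set_integrable_def set_borel_measurable_def by (rule borel_measurable_integrable)
  moreover have "continuous_on {0..1} (\<lambda>x. (f x)^2)" using assms by (intro continuous_intros)
  then have "set_integrable lborel {0..1} (\<lambda>x. (f x)^2)" by (rule borel_integrable_atLeastAtMost')
  then have "set_integrable lborel D (\<lambda>x. (f x)^2)" by (rule set_integrable_subset) auto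
  ultimately show ?thesis by (simp add: L2D_def)
qed

lemma L2norm_nonneg: "0 \<le> L2norm f"
  unfolding L2norm_def set_lebesgue_integral_def by (simp add: indicator_def)

lemma L2norm_le_uniform_bound:
  assumes c: "0 \<le> c" and f: "\<And>x. x \<in> D \<Longrightarrow> \<bar>f x\<bar> \<le> c"
  shows "L2norm f \<le> c"
proof -
  have "(LINT x:D|lborel. (f x)^2) \<le> c^2"
  proof (cases "set_integrable lborel D (\<lambda>x. (f x)^2)")
    case True
    have "set_integrable lborel D (\<lambda>_. c^2)"
      by (rule set_integrable_subset[OF borel_integrable_atLeastAtMost'[of 0 1]]) auto
    then have "(LINT x:D|lborel. (f x)^2) \<le> (LINT x:D|lborel. c^2)"
      using f power_mono[of "\<bar>f _\<bar>" c 2] by (intro set_integral_mono[OF True]) simp_all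
    then show ?thesis by (simp add: set_integral_const)
  next
    case False
    then show ?thesis
      by (simp add: set_lebesgue_integral_def set_integrable_def not_integrable_integral_eq)
  qed
  then show ?thesis
    unfolding L2norm_def using c by (metis real_sqrt_le_mono real_sqrt_unique)
qed

lemma Cauchy_Schwarz_L2D:
  assumes g: "L2D g" and k: "k \<in> borel_measurable lborel" "integrable lborel (\<lambda>t. (k t)^2)"
  shows "integrable lborel (\<lambda>t. k t * (indicator D t * g t))"
    and "\<bar>\<integral>t. k t * (indicator D t * g t) \<partial>lborel\<bar> \<le> sqrt (\<integral>t. (k t)^2 \<partial>lborel) * L2norm g"
proof -
  have sq: "(\<lambda>t. (indicator D t * g t)^2) = (\<lambda>t. indicator D t *\<^sub>R (g t)^2)"
    by (auto simp: indicator_def fun_eq_iff)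
  have G: "(\<lambda>t. indicator D t * g t) \<in> borel_measurable lborel"
    "integrable lborel (\<lambda>t. (indicator D t * g t)^2)"
    using g by (simp_all add: L2D_def set_borel_measurable_def set_integrable_def sq)
  have "L2norm g = sqrt (\<integral>t. (indicator D t * g t)^2 \<partial>lborel)"
    by (simp add: L2norm_def set_lebesgue_integral_def sq)
  then show "integrable lborel (\<lambda>t. k t * (indicator D t * g t))"
    and "\<bar>\<integral>t. k t * (indicator D t * g t) \<partial>lborel\<bar> \<le> sqrt (\<integral>t. (k t)^2 \<partial>lborel) * L2norm g"
    using Cauchy_Schwarz_integral[OF k G] by simp_all
qed

lemma H10_deriv_wderiv: "w \<in> H10 \<Longrightarrow> H10_deriv w (wderiv w)"
  unfolding H10_def wderiv_def by (auto intro: someI[of "H10_deriv w"])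

lemma L2D_wderiv: "w \<in> H10 \<Longrightarrow> L2D (wderiv w)"
  using H10_deriv_wderiv by (simp add: H10_deriv_def)

lemma L2norm_wderiv_le_H1norm: "L2norm (wderiv w) \<le> H1norm w"
proof -
  have "L2norm (wderiv w) = sqrt ((L2norm (wderiv w))^2)" using L2norm_nonneg by simp
  also have "\<dots> \<le> H1norm w" unfolding H1norm_def by (rule real_sqrt_le_mono) simp
  finally show ?thesis .
qed

lemma RL_eq_kernel_integral:
  assumes "0 \<le> x" "x \<le> 1"
  shows "RL a w x = (\<integral>t. RL_kernel (a - 2) x t * (indicator D t * wderiv w t) \<partial>lborel) / Gamma (a - 1)"
  unfolding RL_def set_lebesgue_integral_def
  by (rule arg_cong[where f="\<lambda>z. z / Gamma (a - 1)"], rule Bochner_Integration.integral_cong)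
     (use assms in \<open>auto simp: RL_kernel_def indicator_def\<close>)

lemma abs_RL_le:
  assumes a: "3/2 < a" "a < 2" and w: "w \<in> H10" and x: "x \<in> {0..1}"
  shows "\<bar>RL a w x\<bar> \<le> L2norm (wderiv w) / (sqrt (2*a - 3) * Gamma (a - 1))"
proof -
  have b: "a - 2 > -1/2" and ex: "2 * (a - 2) + 1 = 2*a - 3" using a by simp_all
  have Gamma: "Gamma (a - 1) > 0" using a by (intro Gamma_real_pos) simp
  have x0: "0 \<le> x" using x by simp
  note K = integral_RL_kernel_square[OF b x0]
  have "x powr (2*a - 3) \<le> 1" using powr_mono2[of "2*a - 3" x 1] x a by simp
  then have k_bound: "sqrt (\<integral>t. (RL_kernel (a - 2) x t)^2 \<partial>lborel) \<le> 1 / sqrt (2*a - 3)"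
    using K(2) x a by (simp add: ex real_sqrt_divide divide_right_mono)
  have "\<bar>\<integral>t. RL_kernel (a - 2) x t * (indicator D t * wderiv w t) \<partial>lborel\<bar>
      \<le> 1 / sqrt (2*a - 3) * L2norm (wderiv w)"
    using Cauchy_Schwarz_L2D(2)[OF L2D_wderiv[OF w] RL_kernel_measurable K(1)]
      mult_right_mono[OF k_bound L2norm_nonneg]
    by (rule order_trans)
  then have "\<bar>\<integral>t. RL_kernel (a - 2) x t * (indicator D t * wderiv w t) \<partial>lborel\<bar> / Gamma (a - 1)
      \<le> 1 / sqrt (2*a - 3) * L2norm (wderiv w) / Gamma (a - 1)"
    using Gamma by (intro divide_right_mono) simp_all
  then show ?thesis
    using RL_eq_kernel_integral[of x a w] x by (simp add: abs_div_pos[OF Gamma])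
qed

lemma RL_Holder:
  assumes a: "3/2 < a" "a < 2" and w: "w \<in> H10" and xy: "x \<in> {0..1}" "y \<in> {0..1}"
  shows "\<bar>RL a w x - RL a w y\<bar>
    \<le> sqrt 2 * L2norm (wderiv w) / (sqrt (2*a - 3) * Gamma (a - 1)) * \<bar>x - y\<bar> powr (a - 3/2)"
proof -
  have b: "a - 2 > -1/2" "a - 2 \<le> 0" and ex: "2 * (a - 2) + 1 = 2*a - 3" using a by simp_all
  have Gamma: "Gamma (a - 1) > 0" using a by (intro Gamma_real_pos) simp
  note g = L2D_wderiv[OF w]
  have "\<bar>RL a w x - RL a w y\<bar>
      \<le> sqrt 2 * L2norm (wderiv w) / (sqrt (2*a - 3) * Gamma (a - 1)) * (x - y) powr (a - 3/2)"
    if xy: "y \<in> {0..1}" "x \<in> {0..1}" "y \<le> x" for x y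
  proof -
    define k where "k t = RL_kernel (a - 2) x t - RL_kernel (a - 2) y t" for t
    have y0: "0 \<le> y" using xy by simp
    note Kd = integral_RL_kernel_diff_square[OF b y0 \<open>y \<le> x\<close>, folded k_def]
    have k: "k \<in> borel_measurable lborel" by (simp add: k_def[abs_def])
    have RL_diff: "RL a w x - RL a w y = (\<integral>t. k t * (indicator D t * wderiv w t) \<partial>lborel) / Gamma (a - 1)"
      using xy Cauchy_Schwarz_L2D(1)[OF g RL_kernel_measurable integral_RL_kernel_square(1)[OF b(1)]]
      by (simp add: RL_eq_kernel_integral k_def diff_divide_distrib left_diff_distrib)
    have k_bound: "sqrt (\<integral>t. (k t)^2 \<partial>lborel) \<le> sqrt 2 * (x - y) powr (a - 3/2) / sqrt (2*a - 3)"
    proof -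
      have "sqrt (\<integral>t. (k t)^2 \<partial>lborel) \<le> sqrt (2 * (x - y) powr (2*a - 3) / (2*a - 3))"
        using Kd(2) by (simp add: ex)
      also have "\<dots> = sqrt 2 * sqrt ((x - y) powr (2*a - 3)) / sqrt (2*a - 3)"
        by (simp add: real_sqrt_divide real_sqrt_mult)
      also have "sqrt ((x - y) powr (2*a - 3)) = (x - y) powr (a - 3/2)"
        using xy powr_half_sqrt_powr[of "x - y" "2*a - 3"] by (simp add: diff_divide_distrib)
      finally show ?thesis .
    qed
    have "\<bar>\<integral>t. k t * (indicator D t * wderiv w t) \<partial>lborel\<bar>
        \<le> sqrt 2 * (x - y) powr (a - 3/2) / sqrt (2*a - 3) * L2norm (wderiv w)"
      using Cauchy_Schwarz_L2D(2)[OF g k Kd(1)] mult_right_mono[OF k_bound L2norm_nonneg]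
      by (rule order_trans)
    then have "\<bar>RL a w x - RL a w y\<bar>
        \<le> sqrt 2 * (x - y) powr (a - 3/2) / sqrt (2*a - 3) * L2norm (wderiv w) / Gamma (a - 1)"
      unfolding RL_diff abs_div_pos[OF Gamma, symmetric] using Gamma by (intro divide_right_mono) simp_all
    then show ?thesis by (simp add: divide_simps mult_ac)
  qed
  from this[of y x] this[of x y] xy show ?thesis
    by (cases "y \<le> x") (simp_all add: abs_minus_commute)
qed

lemma Holder_uniformly_equicontinuous:
  fixes F :: "'i \<Rightarrow> 'a::metric_space \<Rightarrow> 'b::metric_space"
  assumes \<gamma>: "0 < \<gamma>" and L: "0 \<le> L"
    and Holder: "\<And>i x y. x \<in> S \<Longrightarrow> y \<in> S \<Longrightarrow> dist (F i x) (F i y) \<le> L * dist x y powr \<gamma>"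
    and e: "0 < e"
  shows "\<exists>d>0. \<forall>i. \<forall>x\<in>S. \<forall>y\<in>S. dist x y < d \<longrightarrow> dist (F i x) (F i y) < e"
proof -
  define c where "c = e / (L + 1)"
  have c: "0 < c" using e L by (simp add: c_def)
  have "L * c = e * (L / (L + 1))" by (simp add: c_def)
  also have "\<dots> < e * 1" using e L by (intro mult_strict_left_mono) auto
  finally have Lc: "L * c < e" by simp
  show ?thesis
  proof (intro exI[of _ "c powr (1/\<gamma>)"] conjI allI ballI impI)
    show "0 < c powr (1/\<gamma>)" using c by simp
    fix i x y assume xy: "x \<in> S" "y \<in> S" and d: "dist x y < c powr (1/\<gamma>)"
    have "dist x y powr \<gamma> \<le> (c powr (1/\<gamma>)) powr \<gamma>"
      using d \<gamma> by (intro powr_mono2) auto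
    also have "\<dots> = c" using \<gamma> c by (simp add: powr_powr)
    finally have "L * dist x y powr \<gamma> \<le> L * c" using L by (rule mult_left_mono)
    then show "dist (F i x) (F i y) < e" using Holder[OF xy, of i] Lc by linarith
  qed
qed

lemma Holder_imp_continuous_on:
  fixes f :: "'a::metric_space \<Rightarrow> 'b::metric_space"
  assumes "0 < \<gamma>" "0 \<le> L" "\<And>x y. x \<in> S \<Longrightarrow> y \<in> S \<Longrightarrow> dist (f x) (f y) \<le> L * dist x y powr \<gamma>"
  shows "continuous_on S f"
proof (rule uniformly_continuous_imp_continuous, unfold uniformly_continuous_on_def, intro allI impI)
  fix e :: real assume "0 < e"
  from Holder_uniformly_equicontinuous[where F="\<lambda>_::unit. f" and S=S, OF assms this]
  show "\<exists>d>0. \<forall>x\<in>S. \<forall>x'\<in>S. dist x' x < d \<longrightarrow> dist (f x') (f x) < e" by blast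
qed

lemma Arzela_Ascoli_Holder:
  fixes F :: "nat \<Rightarrow> 'a::euclidean_space \<Rightarrow> 'b::{real_normed_vector,heine_borel}"
  assumes S: "compact S" and \<gamma>: "0 < \<gamma>" and L: "0 \<le> L"
    and bounded: "\<And>n x. x \<in> S \<Longrightarrow> norm (F n x) \<le> M"
    and Holder: "\<And>n x y. x \<in> S \<Longrightarrow> y \<in> S \<Longrightarrow> norm (F n x - F n y) \<le> L * norm (x - y) powr \<gamma>"
  obtains g k where "continuous_on S g" "strict_mono (k :: nat \<Rightarrow> nat)"
    "\<And>e. 0 < e \<Longrightarrow> \<exists>N. \<forall>n x. n \<ge> N \<and> x \<in> S \<longrightarrow> norm (F (k n) x - g x) < e"
proof (rule Arzela_Ascoli[of S F M])
  show "compact S" by (rule S)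
  show "norm (F n x) \<le> M" if "x \<in> S" for n x using that by (rule bounded)
next
  fix x and e :: real assume x: "x \<in> S" and e: "0 < e"
  obtain d where "0 < d" "\<forall>n. \<forall>x\<in>S. \<forall>y\<in>S. dist x y < d \<longrightarrow> dist (F n x) (F n y) < e"
    using Holder_uniformly_equicontinuous[OF \<gamma> L _ e, of S F] Holder by (auto simp: dist_norm)
  then show "\<exists>d. 0 < d \<and> (\<forall>n y. y \<in> S \<and> norm (x - y) < d \<longrightarrow> norm (F n x - F n y) < e)"
    using x by (auto simp: dist_norm)
qed (blast intro: that)

lemma RL_continuous_on:
  assumes "3/2 < a" "a < 2" "w \<in> H10"
  shows "continuous_on {0..1} (RL a w)"
proof (rule Holder_imp_continuous_on)
  have "Gamma (a - 1) > 0" using assms by (intro Gamma_real_pos) simp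
  then show "0 \<le> sqrt 2 * L2norm (wderiv w) / (sqrt (2*a - 3) * Gamma (a - 1))"
    using assms L2norm_nonneg by simp
qed (use assms RL_Holder in \<open>auto simp: dist_real_def\<close>)

lemma continuous_on_sub_value_at_1_powr:
  fixes h :: "real \<Rightarrow> real"
  assumes "continuous_on {0..1} h" "0 < \<mu>"
  shows "continuous_on {0..1} (\<lambda>x. h x - h 1 * x powr \<mu>)"
proof -
  have "continuous_on {0..1} (\<lambda>x::real. x powr \<mu>)"
    using assms by (intro continuous_on_powr') (auto intro: continuous_intros)
  then show ?thesis
    using assms by (auto intro!: continuous_on_diff continuous_on_mult continuous_on_const)
qed

lemma RL_uniformly_convergent_subseq:
  assumes a: "3/2 < a" "a < 2" and ws: "\<And>n. ws n \<in> H10" and C: "\<And>n. H1norm (ws n) \<le> C"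
  obtains g k where "continuous_on {0..1} g" "strict_mono (k :: nat \<Rightarrow> nat)"
    "\<And>e. 0 < e \<Longrightarrow> \<exists>N. \<forall>n x. n \<ge> N \<and> x \<in> {0..1} \<longrightarrow> \<bar>RL a (ws (k n)) x - g x\<bar> < e"
proof -
  have Gamma: "Gamma (a - 1) > 0" using a by (intro Gamma_real_pos) simp
  define c where "c = C / (sqrt (2*a - 3) * Gamma (a - 1))"
  have L2: "L2norm (wderiv (ws n)) \<le> C" for n
    using L2norm_wderiv_le_H1norm C order_trans by blast
  then have "0 \<le> C" using L2norm_nonneg order_trans by blast
  then have c: "0 \<le> c" "0 \<le> sqrt 2 * c" using a Gamma by (simp_all add: c_def)
  have scale: "L2norm (wderiv (ws n)) / (sqrt (2*a - 3) * Gamma (a - 1)) \<le> c" for n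
    unfolding c_def using a Gamma L2[of n] by (intro divide_right_mono) simp_all
  show ?thesis
  proof (rule Arzela_Ascoli_Holder[of "{0..1}" "a - 3/2" "sqrt 2 * c" "\<lambda>n. RL a (ws n)" c])
    show "norm (RL a (ws n) x) \<le> c" if "x \<in> {0..1}" for n x
      using order_trans[OF abs_RL_le[OF a ws that] scale] by simp
    show "norm (RL a (ws n) x - RL a (ws n) y) \<le> sqrt 2 * c * norm (x - y) powr (a - 3/2)"
      if "x \<in> {0..1}" "y \<in> {0..1}" for n x y
    proof -
      have "sqrt 2 * L2norm (wderiv (ws n)) / (sqrt (2*a - 3) * Gamma (a - 1)) \<le> sqrt 2 * c"
        using mult_left_mono[OF scale[of n], of "sqrt 2"] by simp
      then show ?thesis
        using order_trans[OF RL_Holder[OF a ws that] mult_right_mono] by simp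
    qed
  qed (use a c that in \<open>auto simp: real_norm_def\<close>)
qed

lemma L2norm_Sop_sub_le:
  assumes \<mu>: "0 \<le> \<mu>" and e: "0 \<le> e" and close: "\<And>x. x \<in> {0..1} \<Longrightarrow> \<bar>RL a w x - g x\<bar> \<le> e"
  shows "L2norm (\<lambda>x. Sop a \<mu> w x - (g x - g 1 * x powr \<mu>)) \<le> 2 * e"
proof (rule L2norm_le_uniform_bound)
  fix x assume x: "x \<in> D"
  have p: "0 \<le> x powr \<mu>" "x powr \<mu> \<le> 1" using x powr_mono2[of \<mu> x 1] \<mu> by auto
  have "Sop a \<mu> w x - (g x - g 1 * x powr \<mu>) = (RL a w x - g x) - (RL a w 1 - g 1) * x powr \<mu>"
    by (simp add: Sop_def algebra_simps)
  also have "\<bar>\<dots>\<bar> \<le> \<bar>RL a w x - g x\<bar> + \<bar>RL a w 1 - g 1\<bar> * x powr \<mu>"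
    using abs_triangle_ineq4[of "RL a w x - g x" "(RL a w 1 - g 1) * x powr \<mu>"] p(1)
    by (simp add: abs_mult)
  also have "\<dots> \<le> e + e * 1"
    using close x p e by (intro add_mono mult_mono) auto
  finally show "\<bar>Sop a \<mu> w x - (g x - g 1 * x powr \<mu>)\<bar> \<le> 2 * e" by simp
qed (use e in simp)

lemma L2norm_Sop_sub_tendsto_0:
  assumes \<mu>: "0 \<le> \<mu>"
    and conv: "\<And>e. 0 < e \<Longrightarrow> \<exists>N. \<forall>n x. n \<ge> N \<and> x \<in> {0..1} \<longrightarrow> \<bar>RL a (ws n) x - g x\<bar> < e"
  shows "(\<lambda>n. L2norm (\<lambda>x. Sop a \<mu> (ws n) x - (g x - g 1 * x powr \<mu>))) \<longlonglongrightarrow> 0"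
proof (rule LIMSEQ_I)
  fix e :: real assume e: "0 < e"
  then obtain N where N: "\<And>n x. n \<ge> N \<Longrightarrow> x \<in> {0..1} \<Longrightarrow> \<bar>RL a (ws n) x - g x\<bar> \<le> e/3"
    using conv[of "e/3"] by (auto intro: less_imp_le)
  have "L2norm (\<lambda>x. Sop a \<mu> (ws n) x - (g x - g 1 * x powr \<mu>)) < e" if "n \<ge> N" for n
    using L2norm_Sop_sub_le[where w="ws n", OF \<mu> _ N[OF that]] e by simp
  then show "\<exists>N. \<forall>n\<ge>N. norm (L2norm (\<lambda>x. Sop a \<mu> (ws n) x - (g x - g 1 * x powr \<mu>)) - 0) < e"
    using L2norm_nonneg by auto
qed

theorem lemma5p1:
  fixes \<alpha> \<mu> :: real
  assumes "3/2 < \<alpha>" and "\<alpha> < 2" and "\<mu> \<ge> \<alpha>"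
  shows "compact_H10_L2 (Sop \<alpha> \<mu>)"
  unfolding compact_H10_L2_def
proof (intro conjI ballI allI impI)
  have \<alpha>: "3/2 < \<alpha>" "\<alpha> < 2" and \<mu>: "0 < \<mu>" using assms by auto
  show "L2D (Sop \<alpha> \<mu> w)" if "w \<in> H10" for w
    unfolding Sop_def[abs_def]
    by (intro continuous_on_imp_L2D continuous_on_sub_value_at_1_powr RL_continuous_on \<alpha> that \<mu>)
  fix ws :: "nat \<Rightarrow> real \<Rightarrow> real"
  assume "(\<forall>n. ws n \<in> H10) \<and> (\<exists>C::real. \<forall>n. H1norm (ws n) \<le> C)"
  then obtain C where ws: "\<And>n. ws n \<in> H10" and C: "\<And>n. H1norm (ws n) \<le> C" by auto
  obtain g k where g: "continuous_on {0..1} g" and k: "strict_mono (k :: nat \<Rightarrow> nat)"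
    and conv: "\<And>e. 0 < e \<Longrightarrow> \<exists>N. \<forall>n x. n \<ge> N \<and> x \<in> {0..1} \<longrightarrow> \<bar>RL \<alpha> (ws (k n)) x - g x\<bar> < e"
    by (rule RL_uniformly_convergent_subseq[where ws=ws, OF \<alpha> ws C]) blast
  have "L2D (\<lambda>x. g x - g 1 * x powr \<mu>)"
    using g \<mu> by (intro continuous_on_imp_L2D continuous_on_sub_value_at_1_powr)
  moreover have "(\<lambda>n. L2norm (\<lambda>x. Sop \<alpha> \<mu> (ws (k n)) x - (g x - g 1 * x powr \<mu>))) \<longlonglongrightarrow> 0"
    using \<mu> conv by (intro L2norm_Sop_sub_tendsto_0) auto
  ultimately show "\<exists>r f. strict_mono r \<and> L2D f \<and> (\<lambda>n. L2norm (\<lambda>x. Sop \<alpha> \<mu> (ws (r n)) x - f x)) \<longlonglongrightarrow> 0"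
    using k by blast
qed

end
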